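(* For every $n\in\mathbb{N}$, \[ \frac{2}{3n+1}\sum_{j=0}^{2n}\sum_{i=0}^{j}\frac{\binom{3n+1}{i}}{\binom{3n}{j}}=\psi(3n+2)-\psi(n+1)-\log 2+\frac{3n+2}{2n+2}\,{}_3F_2\!\left(1,1,3n+3;\,2,n+2;\,\tfrac12\right). \]
   Context: $\psi=\Gamma'/\Gamma$ is the digamma function (so $\psi(3n+2)-\psi(n+1)=H_{3n+1}-H_n$ with $H_m=\sum_{k=1}^m\frac1k$). Pochhammer symbol: $(\alpha)_0=1$, $(\alpha)_k=\alpha(\alpha+1)\cdots(\alpha+k-1)$. ${}_3F_2(a,b,c;d,e;z)=\sum_{k\ge0}\frac{(a)_k(b)_k(c)_k}{(d)_k(e)_k}\frac{z^k}{k!}$. *)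

theory Defs
  imports "HOL-Analysis.Analysis"
begin

definition hyp3F2 :: "real \<Rightarrow> real \<Rightarrow> real \<Rightarrow> real \<Rightarrow> real \<Rightarrow> real \<Rightarrow> real" where
  "hyp3F2 a b c d e z =
     (\<Sum>k. pochhammer a k * pochhammer b k * pochhammer c k /
           (pochhammer d k * pochhammer e k) * z ^ k / fact k)"

end

theory Submission
  imports Defs
begin

text \<open>Write N = 3n+1, r = 2n+1 and E(N,r) = sum_{i<r} C(N,i)/(r-i); both sides reduce to
  H_N - H_{N-r} + E(N,r)/C(N,r). On the left, absorption (i+1) C(N,i+1) = (N-i) C(N,i) gives
  2 sum_{i<=r} C(N,i) = C(N,r) + (r+1) E(N,r+1) - (N-r) E(N,r), which makes the double sum
  telescope. On the right, the 3F2 series is a constant multiple of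
  sum_m C(N+m+1,r) 2^(-m-1)/(m+1), which equals C(N,r) ln 2 + E(N,r) by induction on N through
  Pascal's rule; the base cases are the series of ln 2 and the negative binomial series at 1/2.
  Finally psi(m+1) = H_m - gamma.\<close>

definition binom_weighted_sum :: "nat \<Rightarrow> nat \<Rightarrow> real" where
  "binom_weighted_sum N r = (\<Sum>i<r. real (N choose i) / (real r - real i))"

lemma real_binomial_absorption:
  "real (Suc k) * real (N choose Suc k) = (real N - real k) * real (N choose k)"
proof (cases "k < N")
  case True
  have "Suc k * (N choose Suc k) = (N - k) * (N choose k)"
    by (simp only: binomial_absorption binomial_absorb_comp)
  then have "real (Suc k * (N choose Suc k)) = real ((N - k) * (N choose k))"
    by (rule arg_cong)
  with True show ?thesis
    by (simp only: of_nat_mult of_nat_diff less_imp_le)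
next
  case False
  then show ?thesis
    by (cases "k = N") (auto simp: binomial_eq_0)
qed

lemma binom_weighted_sum_recurrence:
  "2 * (\<Sum>i\<le>r. real (N choose i))
     = real (N choose r) + real (Suc r) * binom_weighted_sum N (Suc r)
       - (real N - real r) * binom_weighted_sum N r"
proof -
  have "real (Suc r) * binom_weighted_sum N (Suc r)
      = (\<Sum>i<Suc r. real (N choose i) + real i * real (N choose i) / (real (Suc r) - real i))"
    unfolding binom_weighted_sum_def sum_distrib_left
    by (intro sum.cong refl) (auto simp: field_simps)
  also have "\<dots> = (\<Sum>i<Suc r. real (N choose i))
      + (\<Sum>i<Suc r. real i * real (N choose i) / (real (Suc r) - real i))"
    by (simp add: sum.distrib)
  also have "(\<Sum>i<Suc r. real i * real (N choose i) / (real (Suc r) - real i))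
      = (\<Sum>k<r. real (Suc k) * real (N choose Suc k) / (real (Suc r) - real (Suc k)))"
    by (subst sum.lessThan_Suc_shift) simp
  also have "(\<Sum>k<r. real (Suc k) * real (N choose Suc k) / (real (Suc r) - real (Suc k)))
      = (\<Sum>k<r. (real N - real r) * (real (N choose k) / (real r - real k)) + real (N choose k))"
  proof (intro sum.cong refl)
    fix k
    assume "k \<in> {..<r}"
    then have "real r - real k \<noteq> 0"
      by simp
    then show "real (Suc k) * real (N choose Suc k) / (real (Suc r) - real (Suc k))
        = (real N - real r) * (real (N choose k) / (real r - real k)) + real (N choose k)"
      unfolding real_binomial_absorption by (simp add: field_simps)
  qed
  also have "\<dots> = (real N - real r) * binom_weighted_sum N r + (\<Sum>i<r. real (N choose i))"
    by (simp add: sum.distrib binom_weighted_sum_def sum_distrib_left)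
  finally show ?thesis
    by (simp add: lessThan_Suc_atMost[symmetric])
qed

lemma binom_partial_sum_ratio_eq_diff:
  assumes "r < Suc M"
  defines "f \<equiv> \<lambda>j. binom_weighted_sum (Suc M) j / real (Suc M choose j) - harm (Suc M - j)"
  shows "2 / real (Suc M) * ((\<Sum>i\<le>r. real (Suc M choose i)) / real (M choose r)) = f (Suc r) - f r"
proof -
  define N where "N = Suc M"
  define C where "C = real (N choose r)"
  define d where "d = real N - real r"
  have "r < N" and N_pos: "real N > 0"
    using assms by (simp_all add: N_def)
  then have C_pos: "C > 0" and d_pos: "d > 0"
    by (simp_all add: C_def d_def)
  have next_binom: "real (N choose Suc r) = C * d / real (Suc r)"
    using real_binomial_absorption[of r N] by (simp add: C_def d_def field_simps)
  have "(N - r) * (N choose r) = N * (M choose r)"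
    using binomial_absorb_comp[of N r] by (simp add: N_def)
  then have lower_binom: "real (M choose r) = C * d / real N"
    using \<open>r < N\<close> N_pos by (simp add: C_def d_def field_simps flip: of_nat_diff of_nat_mult)
  have "N - r = Suc (N - Suc r)"
    using \<open>r < N\<close> by simp
  then have harm_step: "harm (N - r) = harm (N - Suc r) + 1 / d"
    using \<open>r < N\<close> by (simp add: d_def harm_Suc of_nat_diff inverse_eq_divide)
  have "2 / real N * ((\<Sum>i\<le>r. real (N choose i)) / (C * d / real N))
      = 2 * (\<Sum>i\<le>r. real (N choose i)) / (C * d)"
    using N_pos by (simp add: field_simps)
  also have "\<dots> = (C + real (Suc r) * binom_weighted_sum N (Suc r) - d * binom_weighted_sum N r) / (C * d)"
    unfolding C_def d_def binom_weighted_sum_recurrence ..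
  also have "\<dots> = binom_weighted_sum N (Suc r) / (C * d / real (Suc r)) - binom_weighted_sum N r / C + 1 / d"
    using C_pos d_pos by (simp add: field_simps del: of_nat_Suc)
  finally show ?thesis
    unfolding f_def N_def[symmetric] lower_binom next_binom harm_step C_def
    by simp
qed

lemma binom_partial_sum_ratios:
  assumes "r \<le> Suc M"
  shows "2 / real (Suc M) * (\<Sum>j<r. (\<Sum>i\<le>j. real (Suc M choose i)) / real (M choose j))
    = harm (Suc M) - harm (Suc M - r) + binom_weighted_sum (Suc M) r / real (Suc M choose r)"
proof -
  define f where "f r = binom_weighted_sum (Suc M) r / real (Suc M choose r) - harm (Suc M - r)" for r
  have "2 / real (Suc M) * (\<Sum>j<r. (\<Sum>i\<le>j. real (Suc M choose i)) / real (M choose j))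
      = (\<Sum>j<r. f (Suc j) - f j)"
    unfolding sum_distrib_left f_def
    using assms by (intro sum.cong refl binom_partial_sum_ratio_eq_diff) simp
  also have "\<dots> = f r - f 0"
    by (rule sum_lessThan_telescope)
  finally show ?thesis
    by (simp add: f_def binom_weighted_sum_def)
qed

lemma negative_binomial_series:
  fixes x :: real
  assumes "\<bar>x\<bar> < 1"
  shows "(\<lambda>k. real (s + k choose s) * x ^ k) sums (1 / (1 - x) ^ Suc s)"
proof -
  have coeff: "(- real (Suc s) gchoose k) * (- x) ^ k = real (s + k choose s) * x ^ k" for k
  proof -
    have "(- real (Suc s) gchoose k) = (-1) ^ k * (real (Suc s) + real k - 1 gchoose k)"
      by (rule gbinomial_minus)
    also have "real (Suc s) + real k - 1 = real (s + k)"
      by simp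
    also have "real (s + k) gchoose k = real (s + k choose k)"
      by (rule binomial_gbinomial[symmetric])
    also have "s + k choose k = s + k choose s"
      using binomial_symmetric[of k "s + k"] by simp
    finally show ?thesis
      by (simp add: power_minus')
  qed
  have "(\<lambda>k. (- real (Suc s) gchoose k) * (- x) ^ k) sums (1 + - x) powr (- real (Suc s))"
    using assms by (intro gen_binomial_real) simp
  moreover have "(1 + - x) powr (- real (Suc s)) = 1 / (1 - x) ^ Suc s"
  proof -
    have "0 < 1 - x"
      using assms by simp
    then show ?thesis
      by (simp only: powr_minus powr_realpow inverse_eq_divide flip: diff_conv_add_uminus)
  qed
  ultimately show ?thesis
    unfolding coeff by simp
qed

lemma binomial_power_series:
  fixes x :: real
  assumes "\<bar>x\<bar> < 1"
  shows "(\<lambda>m. real (m choose s) * x ^ m) sums (x ^ s / (1 - x) ^ Suc s)"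
proof -
  have "(\<lambda>k. x ^ s * (real (s + k choose s) * x ^ k)) sums (x ^ s * (1 / (1 - x) ^ Suc s))"
    using negative_binomial_series[OF assms] by (rule sums_mult)
  also have "(\<lambda>k. x ^ s * (real (s + k choose s) * x ^ k)) = (\<lambda>k. real ((k + s) choose s) * x ^ (k + s))"
    by (rule ext) (simp add: power_add add.commute mult_ac)
  finally have "(\<lambda>k. real ((k + s) choose s) * x ^ (k + s)) sums (x ^ s / (1 - x) ^ Suc s)"
    by simp
  moreover have "(\<Sum>i<s. real (i choose s) * x ^ i) = 0"
    by (intro sum.neutral) simp
  ultimately show ?thesis
    by (subst (asm) sums_iff_shift) simp
qed

lemma ln_one_minus_series:
  fixes x :: real
  assumes "\<bar>x\<bar> < 1"
  shows "(\<lambda>m. x ^ Suc m / real (Suc m)) sums (- ln (1 - x))"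
proof -
  have "(\<lambda>m. - ((- (- x)) ^ m) / real m) sums ln (1 + - x)"
    using assms by (intro ln_series') simp
  then have "(\<lambda>m. x ^ m / real m) sums (- ln (1 - x))"
    using sums_minus by fastforce
  then show ?thesis
    by (subst sums_Suc_iff) simp
qed

lemma binom_weighted_sum_0 [simp]: "binom_weighted_sum N 0 = 0"
  by (simp add: binom_weighted_sum_def)

lemma binom_weighted_sum_0_Suc: "binom_weighted_sum 0 (Suc s) = 1 / real (Suc s)"
  unfolding binom_weighted_sum_def by (subst sum.lessThan_Suc_shift) simp

lemma binom_weighted_sum_Suc_Suc:
  "binom_weighted_sum (Suc N) (Suc s) = binom_weighted_sum N (Suc s) + binom_weighted_sum N s"
proof -
  have shift: "binom_weighted_sum K (Suc s)
      = 1 / real (Suc s) + (\<Sum>i<s. real (K choose Suc i) / (real s - real i))" for K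
    unfolding binom_weighted_sum_def by (subst sum.lessThan_Suc_shift) simp
  show ?thesis
    unfolding shift by (simp add: binom_weighted_sum_def sum.distrib add_divide_distrib)
qed

lemma binomial_half_series:
  "(\<lambda>m. real (N + Suc m choose r) / real (Suc m) * (1/2) ^ Suc m)
     sums (real (N choose r) * ln 2 + binom_weighted_sum N r)"
proof -
  have log_2: "(\<lambda>m. real (K + Suc m choose 0) / real (Suc m) * (1/2) ^ Suc m)
      sums (real (K choose 0) * ln 2 + binom_weighted_sum K 0)" for K
    using ln_one_minus_series[of "1/2"] by (simp add: ln_div ac_simps)
  show ?thesis
  proof (induction N arbitrary: r)
    case 0
    show ?case
    proof (cases r)
      case 0
      then show ?thesis
        using log_2 by blast
    next
      case (Suc s)
      have "(\<lambda>m. real (0 + Suc m choose Suc s) / real (Suc m) * (1/2) ^ Suc m)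
          = (\<lambda>m. 1 / (2 * real (Suc s)) * (real (m choose s) * (1/2) ^ m))"
      proof
        fix m
        show "real (0 + Suc m choose Suc s) / real (Suc m) * (1/2) ^ Suc m
            = 1 / (2 * real (Suc s)) * (real (m choose s) * (1/2) ^ m)"
          using Suc_times_binomial_eq[of m s]
          by (simp add: field_simps del: binomial_Suc_Suc of_nat_Suc flip: of_nat_mult)
      qed
      moreover have "(\<lambda>m. 1 / (2 * real (Suc s)) * (real (m choose s) * (1/2) ^ m))
          sums (1 / (2 * real (Suc s)) * 2)"
        using binomial_power_series[of "1/2" s] by (intro sums_mult) (simp add: power_one_over)
      moreover have "1 / (2 * real (Suc s)) * 2 = real (0 choose Suc s) * ln 2 + binom_weighted_sum 0 (Suc s)"
        by (simp add: binom_weighted_sum_0_Suc field_simps)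
      ultimately show ?thesis
        unfolding Suc by (simp only:)
    qed
  next
    case (Suc N)
    show ?case
    proof (cases r)
      case 0
      then show ?thesis
        using log_2 by blast
    next
      case (Suc s)
      have "(\<lambda>m. real (N + Suc m choose s) / real (Suc m) * (1/2) ^ Suc m
               + real (N + Suc m choose Suc s) / real (Suc m) * (1/2) ^ Suc m)
            sums ((real (N choose s) * ln 2 + binom_weighted_sum N s)
               + (real (N choose Suc s) * ln 2 + binom_weighted_sum N (Suc s)))"
        by (intro sums_add Suc.IH)
      then show ?thesis
        using Suc by (simp add: binom_weighted_sum_Suc_Suc add_divide_distrib algebra_simps)
    qed
  qed
qed

lemma fact_times_pochhammer:
  "fact a * pochhammer (of_nat a + 1) k = (fact (a + k) :: 'a :: {semiring_char_0, comm_semiring_1})"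
proof -
  have "pochhammer 1 (a + k) = pochhammer 1 a * pochhammer (1 + of_nat a :: 'a) k"
    by (rule pochhammer_product')
  then show ?thesis
    by (simp only: pochhammer_fact add.commute)
qed

lemma pochhammer_of_nat_plus_one:
  "pochhammer (real a + 1) k = fact (a + k) / fact a"
  using fact_times_pochhammer[of a k, where 'a = real] by (simp add: field_simps)

lemma hyp3F2_half_term:
  assumes "r \<le> N"
  shows "pochhammer 1 k * pochhammer 1 k * pochhammer (real N + 2) k
           / (pochhammer 2 k * pochhammer (real (N - r) + 2) k) * (1/2) ^ k / fact k
       = 2 * fact r * fact (Suc (N - r)) / fact (Suc N)
           * (real (N + Suc k choose r) / real (Suc k) * (1/2) ^ Suc k)"
proof -
  have p1: "pochhammer 1 k = (fact k :: real)"
    by (simp add: pochhammer_fact)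
  have p2: "pochhammer 2 k = real (Suc k) * (fact k :: real)"
    using pochhammer_of_nat_plus_one[of 1 k] by simp
  have p3: "pochhammer (real N + 2) k = fact (Suc N + k) / fact (Suc N)"
    using pochhammer_of_nat_plus_one[of "Suc N" k] by (simp add: add.commute)
  have p4: "pochhammer (real (N - r) + 2) k = fact (Suc (N - r) + k) / fact (Suc (N - r))"
    using pochhammer_of_nat_plus_one[of "Suc (N - r)" k] by (simp add: add.commute)
  have b: "real (N + Suc k choose r) = fact (Suc N + k) / (fact r * fact (Suc (N - r) + k))"
    using binomial_fact[of r "N + Suc k"] assms by (simp add: Suc_diff_le)
  show ?thesis
    unfolding p1 p2 p3 p4 b power_Suc by (simp add: field_simps del: fact_Suc of_nat_Suc)
qed

lemma hyp3F2_half_eq_binom_weighted_sum: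
  assumes "r \<le> N"
  shows "(real N + 1) / (2 * (real (N - r) + 1)) * hyp3F2 1 1 (real N + 2) 2 (real (N - r) + 2) (1/2)
    = ln 2 + binom_weighted_sum N r / real (N choose r)"
proof -
  define K :: real where "K = 2 * fact r * fact (Suc (N - r)) / fact (Suc N)"
  define C where "C = real (N choose r)"
  have "hyp3F2 1 1 (real N + 2) 2 (real (N - r) + 2) (1/2)
      = (\<Sum>k. K * (real (N + Suc k choose r) / real (Suc k) * (1/2) ^ Suc k))"
    unfolding hyp3F2_def K_def hyp3F2_half_term[OF assms] ..
  also have "\<dots> = K * (C * ln 2 + binom_weighted_sum N r)"
    unfolding C_def by (intro sums_unique[symmetric] sums_mult binomial_half_series)
  finally have series: "hyp3F2 1 1 (real N + 2) 2 (real (N - r) + 2) (1/2) = K * (C * ln 2 + binom_weighted_sum N r)" .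
  have binom: "C = fact N / (fact r * fact (N - r))"
    unfolding C_def using assms by (rule binomial_fact)
  have facts: "fact (Suc N) = (real N + 1) * fact N"
    "fact (Suc (N - r)) = (real (N - r) + 1) * fact (N - r)"
    by simp_all
  have cancel: "a / (2 * b) * (2 * y * (b * z) / (a * x)) * (x / (y * z)) = 1"
    if "a > 0" "b > 0" "x > 0" "y > 0" "z > 0" for a b x y z :: real
    using that by (simp add: field_simps)
  have normalization: "(real N + 1) / (2 * (real (N - r) + 1)) * K * C = 1"
    unfolding K_def binom facts by (intro cancel) simp_all
  have "C > 0"
    unfolding C_def using assms by simp
  with series normalization show ?thesis
    unfolding C_def by (simp add: field_simps)
qed

theorem mainTheorem16:
  fixes n :: nat
  shows "2 / (3 * real n + 1) *
           (\<Sum>j=0..2*n. \<Sum>i=0..j. real (Suc (3*n) choose i) / real (3*n choose j))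
         = Digamma (real (3*n+2)) - Digamma (real (n+1)) - ln 2
           + (3 * real n + 2) / (2 * real n + 2)
             * hyp3F2 1 1 (real (3*n+3)) 2 (real (n+2)) (1/2)"
proof -
  define E where "E = binom_weighted_sum (Suc (3*n)) (Suc (2*n)) / real (Suc (3*n) choose Suc (2*n))"
  have double_sum: "(\<Sum>j=0..2*n. \<Sum>i=0..j. real (Suc (3*n) choose i) / real (3*n choose j))
      = (\<Sum>j<Suc (2*n). (\<Sum>i\<le>j. real (Suc (3*n) choose i)) / real (3*n choose j))"
    by (simp add: atLeast0AtMost lessThan_Suc_atMost sum_divide_distrib)
  have "2 / (3 * real n + 1) *
      (\<Sum>j=0..2*n. \<Sum>i=0..j. real (Suc (3*n) choose i) / real (3*n choose j))
      = harm (Suc (3*n)) - harm n + E"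
    using binom_partial_sum_ratios[of "Suc (2*n)" "3*n"]
    unfolding double_sum E_def by (simp add: add.commute)
  moreover have "(3 * real n + 2) / (2 * real n + 2) * hyp3F2 1 1 (real (3*n+3)) 2 (real (n+2)) (1/2)
      = ln 2 + E"
  proof -
    have "Suc (3*n) - Suc (2*n) = n"
      by simp
    then have "real (Suc (3*n)) + 2 = real (3*n+3)" "real (Suc (3*n) - Suc (2*n)) + 2 = real (n+2)"
      "(real (Suc (3*n)) + 1) / (2 * (real (Suc (3*n) - Suc (2*n)) + 1)) = (3 * real n + 2) / (2 * real n + 2)"
      by simp_all
    then show ?thesis
      using hyp3F2_half_eq_binom_weighted_sum[of "Suc (2*n)" "Suc (3*n)"] by (simp only: E_def)
  qed
  moreover have "Digamma (real (3*n+2)) - Digamma (real (n+1)) = harm (Suc (3*n)) - harm n"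
    using Digamma_of_nat[of "Suc (3*n)", where 'a = real] Digamma_of_nat[of n, where 'a = real]
    by (simp add: add.commute)
  ultimately show ?thesis
    by simp
qed

end
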